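(* Let $0<r_j<\infty$ and $0<s_j<\infty$ for $j=1,\dots,n$, and let $\gamma(\mathbf{r})=\otimes_{j=1}^n\gamma(r_j)$, $\gamma(\mathbf{s})=\otimes_{j=1}^n\gamma(s_j)$. Then: (1) If $r_j\ge s_j$ for all $j$, then $D_\alpha(\gamma(\mathbf{r})\|\gamma(\mathbf{s}))<\infty$ for every $\alpha\in(0,1)\cup(1,\infty)$. (2) If $r_j<s_j$ for some $j$, then for $\alpha\in(0,1)\cup(1,\infty)$, $$D_\alpha(\gamma(\mathbf{r})\|\gamma(\mathbf{s}))<\infty\iff\alpha<\min\left\{\frac{s_j}{s_j-r_j}: j\in\{1,\dots,n\}\text{ such that } r_j<s_j\right\}.$$
   Context: One-mode Fock space: $\ell^2(\mathbb{Z}_{\ge 0})$ with orthonormal particle basis $\{|k\rangle\}$; $n$-mode space is the $n$-fold tensor product. For $0<s<\infty$, the thermal state is $\gamma(s)=(1-e^{-s})\sum_{k\ge0}e^{-ks}|k\rangle\langle k|$. For states $\rho=\sum_i p_i|x_i\rangle\langle x_i|$, $\sigma=\sum_j q_j|y_j\rangle\langle y_j|$ (spectral decompositions with orthonormal bases), the Petz–Rényi relative entropy is $D_\alpha(\rho\|\sigma)=\frac{1}{\alpha-1}\log\sum_{i,j}p_i^\alpha q_j^{1-\alpha}|\langle x_i|y_j\rangle|^2$ for $\alpha\in(0,1)\cup(1,\infty)$. *)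

theory Defs
  imports "HOL-Analysis.Analysis"
begin

text \<open>Petz--Renyi relative entropy of two states given by spectral decompositions
  rho = sum over i in I of p i |x i><x i| and sigma = sum over j in J of q j |y j><y j|
  (orthonormal families x, y), with respect to an inner product ip.
  The double sum of non-negative terms is taken in ennreal (it may be infinite);
  the result lives in ereal, with log 0 = -infinity and log infinity = +infinity.\<close>
definition petz_renyi ::
  "real \<Rightarrow> 'i set \<Rightarrow> ('i \<Rightarrow> real) \<Rightarrow> ('i \<Rightarrow> 'v) \<Rightarrow>
   'j set \<Rightarrow> ('j \<Rightarrow> real) \<Rightarrow> ('j \<Rightarrow> 'v) \<Rightarrow> ('v \<Rightarrow> 'v \<Rightarrow> complex) \<Rightarrow> ereal" where
  "petz_renyi \<alpha> I p x J q y ip =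
     (let S = (\<Sum>\<^sub>\<infinity>(i,j)\<in>I \<times> J.
                 ennreal (p i powr \<alpha> * q j powr (1 - \<alpha>) * (cmod (ip (x i) (y j)))\<^sup>2))
      in if S = top then (if \<alpha> > 1 then \<infinity> else - \<infinity>)
         else if S = 0 then (if \<alpha> > 1 then - \<infinity> else \<infinity>)
         else ereal (1 / (\<alpha> - 1) * ln (enn2real S)))"

text \<open>n-mode Fock space: l2 of the multi-indices (occupation numbers of modes 0..n-1),
  i.e. the n-fold tensor product of l2(Z_{>=0}); vectors are functions on multi-indices.\<close>
definition multi_idx :: "nat \<Rightarrow> (nat \<Rightarrow> nat) set" where
  "multi_idx n = PiE {..<n} (\<lambda>_. UNIV)"

definition fock_inner :: "((nat \<Rightarrow> nat) \<Rightarrow> complex) \<Rightarrow> ((nat \<Rightarrow> nat) \<Rightarrow> complex) \<Rightarrow> complex" where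
  "fock_inner f g = (\<Sum>\<^sub>\<infinity>k. cnj (f k) * g k)"

definition ket :: "(nat \<Rightarrow> nat) \<Rightarrow> ((nat \<Rightarrow> nat) \<Rightarrow> complex)" where
  "ket k = (\<lambda>l. if l = k then 1 else 0)"

text \<open>Eigenvalue of the one-mode thermal state gamma(s) on |k>.\<close>
definition thermal_ev :: "real \<Rightarrow> nat \<Rightarrow> real" where
  "thermal_ev s k = (1 - exp (- s)) * exp (- real k * s)"

definition thermal_multi_ev :: "nat \<Rightarrow> (nat \<Rightarrow> real) \<Rightarrow> (nat \<Rightarrow> nat) \<Rightarrow> real" where
  "thermal_multi_ev n r k = (\<Prod>j<n. thermal_ev (r j) (k j))"

definition D_thermal :: "real \<Rightarrow> nat \<Rightarrow> (nat \<Rightarrow> real) \<Rightarrow> (nat \<Rightarrow> real) \<Rightarrow> ereal" where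
  "D_thermal \<alpha> n r s =
     petz_renyi \<alpha> (multi_idx n) (thermal_multi_ev n r) ket
                  (multi_idx n) (thermal_multi_ev n s) ket fock_inner"

end

theory Submission
  imports Defs "HOL-Analysis.Infinite_Set_Sum"
begin

text \<open>Both thermal states are diagonal in the particle basis, so the Petz sum reduces to its
  diagonal, where it factorises over the modes into geometric series with ratios
  \<open>exp (-(\<alpha> r\<^sub>j + (1 - \<alpha>) s\<^sub>j))\<close>. It is finite iff every exponent \<open>\<alpha> r\<^sub>j + (1 - \<alpha>) s\<^sub>j\<close> is
  positive; this is automatic when \<open>\<alpha> < 1\<close> or \<open>r\<^sub>j \<ge> s\<^sub>j\<close>, and otherwise means
  \<open>\<alpha> < s\<^sub>j / (s\<^sub>j - r\<^sub>j)\<close>. A divergent sum makes \<open>D\<^sub>\<alpha> = \<infinity>\<close> only when \<open>\<alpha> > 1\<close> (for \<open>\<alpha> < 1\<close>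
  it gives \<open>-\<infinity>\<close>).\<close>

lemma fock_inner_ket: "fock_inner (ket i) (ket j) = (if i = j then 1 else 0)"
proof (cases "i = j")
  case True
  have "fock_inner (ket i) (ket j) = (\<Sum>\<^sub>\<infinity>k\<in>{i}. cnj (ket i k) * ket j k)"
    unfolding fock_inner_def by (rule infsum_cong_neutral) (auto simp: ket_def True)
  then show ?thesis using True by (simp add: ket_def)
next
  case False
  then show ?thesis unfolding fock_inner_def ket_def by (auto intro!: infsum_0)
qed

lemma infsum_diagonal:
  fixes F :: "'a \<Rightarrow> 'a \<Rightarrow> 'b :: {topological_comm_monoid_add, t2_space}"
  assumes "\<And>i j. i \<in> I \<Longrightarrow> j \<in> I \<Longrightarrow> i \<noteq> j \<Longrightarrow> F i j = 0"
  shows "(\<Sum>\<^sub>\<infinity>(i,j)\<in>I \<times> I. F i j) = (\<Sum>\<^sub>\<infinity>k\<in>I. F k k)"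
proof -
  have "(\<Sum>\<^sub>\<infinity>(i,j)\<in>I \<times> I. F i j) = (\<Sum>\<^sub>\<infinity>(i,j)\<in>(\<lambda>k. (k,k)) ` I. F i j)"
    by (rule infsum_cong_neutral) (auto simp: assms image_iff)
  also have "\<dots> = (\<Sum>\<^sub>\<infinity>k\<in>I. F k k)"
    by (subst infsum_reindex) (auto simp: inj_on_def o_def)
  finally show ?thesis .
qed

lemma petz_renyi_sum_orthonormal:
  assumes "\<And>i j. i \<in> I \<Longrightarrow> j \<in> I \<Longrightarrow> ip (x i) (x j) = (if i = j then 1 else 0)"
  shows "(\<Sum>\<^sub>\<infinity>(i,j)\<in>I \<times> I. ennreal (p i powr \<alpha> * q j powr (1 - \<alpha>) * (cmod (ip (x i) (x j)))\<^sup>2))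
      = (\<Sum>\<^sub>\<infinity>k\<in>I. ennreal (p k powr \<alpha> * q k powr (1 - \<alpha>)))"
  by (subst infsum_diagonal) (auto simp: assms intro: infsum_cong)

lemma petz_renyi_less_infinity_iff:
  assumes "(\<Sum>\<^sub>\<infinity>(i,j)\<in>I \<times> J. ennreal (p i powr \<alpha> * q j powr (1 - \<alpha>) * (cmod (ip (x i) (y j)))\<^sup>2)) \<noteq> 0"
    and "\<alpha> \<noteq> 1"
  shows "petz_renyi \<alpha> I p x J q y ip < \<infinity> \<longleftrightarrow>
    \<alpha> < 1 \<or> (\<Sum>\<^sub>\<infinity>(i,j)\<in>I \<times> J. ennreal (p i powr \<alpha> * q j powr (1 - \<alpha>) * (cmod (ip (x i) (y j)))\<^sup>2)) \<noteq> top"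
  using assms unfolding petz_renyi_def Let_def by auto

lemma thermal_ev_powr_mult:
  assumes "0 < r" "0 < s"
  shows "thermal_ev r m powr a * thermal_ev s m powr (1 - a) =
    (1 - exp (-r)) powr a * (1 - exp (-s)) powr (1 - a) * exp (- (a * r + (1 - a) * s)) ^ m"
proof -
  have "0 < 1 - exp (-r)" "0 < 1 - exp (-s)" using assms by auto
  moreover have exp_powr: "exp x powr b = exp (b * x)" for x b :: real
    by (simp add: powr_def)
  ultimately have "thermal_ev r m powr a * thermal_ev s m powr (1 - a) =
      (1 - exp (-r)) powr a * (1 - exp (-s)) powr (1 - a) *
      (exp (a * (- real m * r)) * exp ((1 - a) * (- real m * s)))"
    unfolding thermal_ev_def by (simp add: powr_mult exp_powr)
  also have "exp (a * (- real m * r)) * exp ((1 - a) * (- real m * s)) =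
      exp (real m * (- (a * r + (1 - a) * s)))"
    by (simp add: exp_add[symmetric] algebra_simps)
  finally show ?thesis by (simp add: exp_of_nat_mult)
qed

lemma thermal_multi_ev_powr_mult:
  assumes "\<forall>j<n. 0 < r j" "\<forall>j<n. 0 < s j"
  shows "thermal_multi_ev n r k powr a * thermal_multi_ev n s k powr (1 - a) =
    (\<Prod>j<n. (1 - exp (-r j)) powr a * (1 - exp (-s j)) powr (1 - a) *
              exp (- (a * r j + (1 - a) * s j)) ^ k j)"
proof -
  have "0 \<le> thermal_ev (r j) (k j)" "0 \<le> thermal_ev (s j) (k j)" if "j < n" for j
    using assms that by (auto simp: thermal_ev_def)
  then have "thermal_multi_ev n r k powr a * thermal_multi_ev n s k powr (1 - a) =
      (\<Prod>j<n. thermal_ev (r j) (k j) powr a * thermal_ev (s j) (k j) powr (1 - a))"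
    unfolding thermal_multi_ev_def by (simp add: prod_powr_distrib prod.distrib)
  also have "\<dots> = (\<Prod>j<n. (1 - exp (-r j)) powr a * (1 - exp (-s j)) powr (1 - a) *
                             exp (- (a * r j + (1 - a) * s j)) ^ k j)"
    using assms by (intro prod.cong refl thermal_ev_powr_mult) auto
  finally show ?thesis .
qed

lemma infsum_prod_geometric_neq_top:
  fixes c q :: "nat \<Rightarrow> real"
  assumes c: "\<forall>j<n. 0 \<le> c j" and q: "\<forall>j<n. 0 \<le> q j \<and> q j < 1"
  shows "(\<Sum>\<^sub>\<infinity>k\<in>multi_idx n. ennreal (\<Prod>j<n. c j * q j ^ k j)) \<noteq> top"
proof -
  define G where "G k = (\<Prod>j<n. c j * q j ^ k j)" for k :: "nat \<Rightarrow> nat"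
  have G_nonneg: "0 \<le> G k" for k
    unfolding G_def using c q by (auto intro!: prod_nonneg)
  have "Infinite_Set_Sum.abs_summable_on (\<lambda>m. c j * q j ^ m) UNIV" if "j < n" for j
  proof -
    have "summable (\<lambda>m. c j * q j ^ m)"
      using q that by (intro summable_mult summable_geometric) auto
    then show ?thesis
      using c q that by (simp add: abs_summable_on_nat_iff' abs_mult)
  qed
  then have "Infinite_Set_Sum.abs_summable_on G (multi_idx n)"
    unfolding multi_idx_def G_def by (intro abs_summable_on_prod_PiE) auto
  then have "G summable_on multi_idx n"
    using G_nonneg by (simp add: abs_summable_equivalent[symmetric] abs_summable_on_def)
  then have "(\<Sum>\<^sub>\<infinity>k\<in>multi_idx n. ennreal (G k)) = ennreal (\<Sum>\<^sub>\<infinity>k\<in>multi_idx n. G k)"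
    using infsum_comm_additive_general[of _ ennreal G] G_nonneg
    by (simp add: o_def sum_ennreal)
  then show ?thesis unfolding G_def by simp
qed

lemma infsum_prod_geometric_eq_top:
  fixes c q :: "nat \<Rightarrow> real"
  assumes c: "\<forall>j<n. 0 < c j" and j: "j < n" "1 \<le> q j"
  shows "(\<Sum>\<^sub>\<infinity>k\<in>multi_idx n. ennreal (\<Prod>j<n. c j * q j ^ k j)) = top"
proof -
  define axis where "axis m = restrict (\<lambda>i. if i = j then m else 0) {..<n}" for m :: nat
  have axis_in: "range axis \<subseteq> multi_idx n"
    unfolding axis_def multi_idx_def by (simp add: image_subset_iff)
  have "inj axis"
  proof (rule injI)
    fix m m' assume "axis m = axis m'"
    then have "axis m j = axis m' j" by simp
    then show "m = m'" using j by (simp add: axis_def)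
  qed
  then have "infinite (range axis)"
    using finite_imageD by blast
  moreover have "ennreal (\<Prod>i<n. c i) \<le> ennreal (\<Prod>i<n. c i * q i ^ k i)" if "k \<in> range axis" for k
  proof (intro ennreal_leI prod_mono conjI)
    fix i assume i: "i \<in> {..<n}"
    have "1 \<le> q i ^ k i"
      using that i j by (cases "i = j") (auto simp: axis_def)
    then show "c i \<le> c i * q i ^ k i"
      using mult_left_mono[of 1 "q i ^ k i" "c i"] c i by simp
  qed (use c in auto)
  moreover have "0 < (\<Prod>i<n. c i)"
    using c by (auto intro!: prod_pos)
  ultimately have "(\<Sum>\<^sub>\<infinity>k\<in>range axis. ennreal (\<Prod>j<n. c j * q j ^ k j)) = \<infinity>"
    by (intro infsum_superconst_infinite_ennreal[where b="ennreal (\<Prod>j<n. c j)"]) auto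
  moreover have "(\<Sum>\<^sub>\<infinity>k\<in>range axis. ennreal (\<Prod>j<n. c j * q j ^ k j))
      \<le> (\<Sum>\<^sub>\<infinity>k\<in>multi_idx n. ennreal (\<Prod>j<n. c j * q j ^ k j))"
    using axis_in by (intro infsum_mono_neutral) (auto intro: nonneg_summable_on_complete)
  ultimately show ?thesis by (simp add: top_unique infinity_ennreal_def)
qed

lemma infsum_prod_geometric_neq_zero:
  fixes c q :: "nat \<Rightarrow> real"
  assumes c: "\<forall>j<n. 0 < c j"
  shows "(\<Sum>\<^sub>\<infinity>k\<in>multi_idx n. ennreal (\<Prod>j<n. c j * q j ^ k j)) \<noteq> 0"
proof -
  define origin where "origin = restrict (\<lambda>_. 0::nat) {..<n}"
  have "origin \<in> multi_idx n"
    unfolding origin_def multi_idx_def by simp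
  then have "(\<Sum>\<^sub>\<infinity>k\<in>{origin}. ennreal (\<Prod>j<n. c j * q j ^ k j))
      \<le> (\<Sum>\<^sub>\<infinity>k\<in>multi_idx n. ennreal (\<Prod>j<n. c j * q j ^ k j))"
    by (intro infsum_mono_neutral) (auto intro: nonneg_summable_on_complete)
  then have "ennreal (\<Prod>j<n. c j * q j ^ origin j)
      \<le> (\<Sum>\<^sub>\<infinity>k\<in>multi_idx n. ennreal (\<Prod>j<n. c j * q j ^ k j))"
    by simp
  moreover have "0 < ennreal (\<Prod>j<n. c j * q j ^ origin j)"
    using c by (auto simp: origin_def intro!: prod_pos)
  ultimately have "0 < (\<Sum>\<^sub>\<infinity>k\<in>multi_idx n. ennreal (\<Prod>j<n. c j * q j ^ k j))"
    by (rule order_less_le_trans[rotated])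
  then show ?thesis by simp
qed

lemma infsum_prod_geometric_neq_top_iff:
  fixes c q :: "nat \<Rightarrow> real"
  assumes "\<forall>j<n. 0 < c j" and "\<forall>j<n. 0 \<le> q j"
  shows "(\<Sum>\<^sub>\<infinity>k\<in>multi_idx n. ennreal (\<Prod>j<n. c j * q j ^ k j)) \<noteq> top \<longleftrightarrow> (\<forall>j<n. q j < 1)"
proof
  assume "(\<Sum>\<^sub>\<infinity>k\<in>multi_idx n. ennreal (\<Prod>j<n. c j * q j ^ k j)) \<noteq> top"
  then show "\<forall>j<n. q j < 1"
    using infsum_prod_geometric_eq_top[OF assms(1)] by (meson not_le)
next
  assume "\<forall>j<n. q j < 1"
  then show "(\<Sum>\<^sub>\<infinity>k\<in>multi_idx n. ennreal (\<Prod>j<n. c j * q j ^ k j)) \<noteq> top"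
    using assms by (intro infsum_prod_geometric_neq_top) auto
qed

lemma affine_combination_pos_iff:
  fixes \<alpha> r s :: real
  assumes "0 < \<alpha>" "0 < s"
  shows "0 < \<alpha> * r + (1 - \<alpha>) * s \<longleftrightarrow> (r < s \<longrightarrow> \<alpha> < s / (s - r))"
proof (cases "r < s")
  case True
  have "\<alpha> * r + (1 - \<alpha>) * s = s - \<alpha> * (s - r)"
    by (simp add: algebra_simps)
  then show ?thesis
    using True by (simp add: pos_less_divide_eq)
next
  case False
  have "\<alpha> * r + (1 - \<alpha>) * s = s + \<alpha> * (r - s)"
    by (simp add: algebra_simps)
  moreover have "0 \<le> \<alpha> * (r - s)"
    using False assms by simp
  ultimately have "0 < \<alpha> * r + (1 - \<alpha>) * s"
    using assms by linarith
  then show ?thesis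
    using False by simp
qed

lemma D_thermal_less_infinity_iff:
  assumes r: "\<forall>j<n. 0 < r j" and s: "\<forall>j<n. 0 < s j"
    and \<alpha>: "0 < \<alpha>" "\<alpha> \<noteq> 1"
  shows "D_thermal \<alpha> n r s < \<infinity> \<longleftrightarrow> (\<forall>j<n. r j < s j \<longrightarrow> \<alpha> < s j / (s j - r j))"
proof -
  define c where "c j = (1 - exp (-r j)) powr \<alpha> * (1 - exp (-s j)) powr (1 - \<alpha>)" for j
  define t where "t j = \<alpha> * r j + (1 - \<alpha>) * s j" for j
  define S where "S = (\<Sum>\<^sub>\<infinity>k\<in>multi_idx n. ennreal (\<Prod>j<n. c j * exp (- t j) ^ k j))"
  have c_pos: "\<forall>j<n. 0 < c j"
  proof (intro allI impI)
    fix j assume "j < n"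
    then have "exp (- r j) < 1" "exp (- s j) < 1"
      using r s by auto
    then show "0 < c j"
      unfolding c_def by (intro mult_pos_pos) auto
  qed
  have exp_nonneg: "\<forall>j<n. 0 \<le> exp (- t j)"
    by simp
  have "(\<Sum>\<^sub>\<infinity>(i,j)\<in>multi_idx n \<times> multi_idx n. ennreal (thermal_multi_ev n r i powr \<alpha> *
          thermal_multi_ev n s j powr (1 - \<alpha>) * (cmod (fock_inner (ket i) (ket j)))\<^sup>2)) =
      (\<Sum>\<^sub>\<infinity>k\<in>multi_idx n. ennreal (thermal_multi_ev n r k powr \<alpha> * thermal_multi_ev n s k powr (1 - \<alpha>)))"
    by (rule petz_renyi_sum_orthonormal[where ip = fock_inner and x = ket]) (simp add: fock_inner_ket)
  also have "\<dots> = S"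
    unfolding S_def using r s by (intro infsum_cong) (simp add: thermal_multi_ev_powr_mult c_def t_def)
  finally have "D_thermal \<alpha> n r s < \<infinity> \<longleftrightarrow> \<alpha> < 1 \<or> S \<noteq> top"
    unfolding D_thermal_def using \<alpha>(2) infsum_prod_geometric_neq_zero[OF c_pos]
    by (subst petz_renyi_less_infinity_iff) (auto simp: S_def)
  also have "\<dots> \<longleftrightarrow> \<alpha> < 1 \<or> (\<forall>j<n. 0 < t j)"
    unfolding S_def infsum_prod_geometric_neq_top_iff[OF c_pos exp_nonneg] by simp
  also have "\<dots> \<longleftrightarrow> (\<forall>j<n. 0 < t j)"
  proof -
    have "0 < t j" if "\<alpha> < 1" "j < n" for j
      using r s \<alpha>(1) that unfolding t_def by (intro add_pos_pos mult_pos_pos) auto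
    then show ?thesis by blast
  qed
  also have "\<dots> \<longleftrightarrow> (\<forall>j<n. r j < s j \<longrightarrow> \<alpha> < s j / (s j - r j))"
    using s \<alpha>(1) by (simp add: t_def affine_combination_pos_iff)
  finally show ?thesis .
qed

theorem corollary3p4:
  fixes n :: nat and r s :: "nat \<Rightarrow> real" and \<alpha> :: real
  assumes "\<forall>j<n. 0 < r j" and "\<forall>j<n. 0 < s j"
    and "0 < \<alpha>" and "\<alpha> \<noteq> 1"
  shows "((\<forall>j<n. s j \<le> r j) \<longrightarrow> D_thermal \<alpha> n r s < \<infinity>) \<and>
         ((\<exists>j<n. r j < s j) \<longrightarrow>
            (D_thermal \<alpha> n r s < \<infinity> \<longleftrightarrow>
             \<alpha> < Min {s j / (s j - r j) | j. j < n \<and> r j < s j}))"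
proof (intro conjI impI)
  note D_iff = D_thermal_less_infinity_iff[OF assms]
  show "D_thermal \<alpha> n r s < \<infinity>" if "\<forall>j<n. s j \<le> r j"
    unfolding D_iff using that by (meson not_less)
  assume "\<exists>j<n. r j < s j"
  then have "{j. j < n \<and> r j < s j} \<noteq> {}"
    by blast
  then show "D_thermal \<alpha> n r s < \<infinity> \<longleftrightarrow> \<alpha> < Min {s j / (s j - r j) | j. j < n \<and> r j < s j}"
    unfolding D_iff setcompr_eq_image by (auto simp: Min_gr_iff)
qed

end
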